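(* Let $G=(V,E)$ be a graph with colouring $f:V\to\{B,R\}$ and let $E'$ be an optimal solution to the MIAE problem on $(G,f)$. Then for every red node $v$, exactly $\max(r(v)-b(v),0)$ edges of $E'\setminus E$ are incident to $v$, where $r(v),b(v)$ are the numbers of red and blue neighbours of $v$ in $G$.
   Context: Graphs are finite, simple and undirected. A colouring $f:V\to\{B,R\}$ partitions $V$ into the blue nodes $B=f^{-1}(B)$ and red nodes $R=f^{-1}(R)$. For an edge set $E'$ on $V$ and $v\in V$, let $b_{E'}(v)$ and $r_{E'}(v)$ be the numbers of blue and red neighbours of $v$ in $(V,E')$; write $b(v)=b_E(v)$, $r(v)=r_E(v)$. A node $v$ is under (majority) illusion in $(V,E')$ if $r_{E'}(v)>b_{E'}(v)$. Standing assumption: $|B|>|R|$. An optimal solution to MIAE is an edge set $E'\supseteq E$ on $V$ such that no node is under illusion in $(V,E')$ and $|E'\setminus E|$ is minimum among all such sets. *)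

theory Defs
  imports Main
begin

datatype colour = Blue | Red

definition simple_graph :: "'a set \<Rightarrow> 'a set set \<Rightarrow> bool" where
  "simple_graph V E \<longleftrightarrow> finite V \<and> (\<forall>e\<in>E. \<exists>u v. e = {u, v} \<and> u \<noteq> v \<and> u \<in> V \<and> v \<in> V)"

definition blue_nodes :: "'a set \<Rightarrow> ('a \<Rightarrow> colour) \<Rightarrow> 'a set" where
  "blue_nodes V f = {v \<in> V. f v = Blue}"

definition red_nodes :: "'a set \<Rightarrow> ('a \<Rightarrow> colour) \<Rightarrow> 'a set" where
  "red_nodes V f = {v \<in> V. f v = Red}"

definition neighbours :: "'a set \<Rightarrow> 'a set set \<Rightarrow> 'a \<Rightarrow> 'a set" where
  "neighbours V E v = {u \<in> V. {u, v} \<in> E}"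

definition blue_deg :: "'a set \<Rightarrow> 'a set set \<Rightarrow> ('a \<Rightarrow> colour) \<Rightarrow> 'a \<Rightarrow> nat" where
  "blue_deg V E f v = card {u \<in> neighbours V E v. f u = Blue}"

definition red_deg :: "'a set \<Rightarrow> 'a set set \<Rightarrow> ('a \<Rightarrow> colour) \<Rightarrow> 'a \<Rightarrow> nat" where
  "red_deg V E f v = card {u \<in> neighbours V E v. f u = Red}"

definition under_illusion :: "'a set \<Rightarrow> 'a set set \<Rightarrow> ('a \<Rightarrow> colour) \<Rightarrow> 'a \<Rightarrow> bool" where
  "under_illusion V E f v \<longleftrightarrow> red_deg V E f v > blue_deg V E f v"

definition miae_feasible :: "'a set \<Rightarrow> 'a set set \<Rightarrow> ('a \<Rightarrow> colour) \<Rightarrow> 'a set set \<Rightarrow> bool" where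
  "miae_feasible V E f E' \<longleftrightarrow> simple_graph V E' \<and> E \<subseteq> E' \<and> (\<forall>v\<in>V. \<not> under_illusion V E' f v)"

definition miae_optimal :: "'a set \<Rightarrow> 'a set set \<Rightarrow> ('a \<Rightarrow> colour) \<Rightarrow> 'a set set \<Rightarrow> bool" where
  "miae_optimal V E f E' \<longleftrightarrow> miae_feasible V E f E' \<and>
     (\<forall>E''. miae_feasible V E f E'' \<longrightarrow> card (E' - E) \<le> card (E'' - E))"

end

theory Submission
  imports Defs
begin

text \<open>
  Deleting an added edge from an optimal solution must create an illusion, and the deletion only
  lowers the degrees of the two endpoints. If both endpoints are red, no node loses a blue
  neighbour, so nobody falls under illusion; hence every added edge at a red node \<open>v\<close> goes to
  a blue node, and deleting it can only put \<open>v\<close> itself under illusion. Thus red \<open>v\<close> keeps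
  \<open>r(v)\<close> red neighbours, gains one blue neighbour per added edge, and, if it gains any, is
  tight (\<open>r = b\<close>) in the solution.
\<close>

lemma neighbours_Diff_edge:
  "neighbours V (E - {e}) w = neighbours V E w - {x. {x, w} = e}"
  by (auto simp: neighbours_def)

lemma finite_neighbours: "finite V \<Longrightarrow> finite (neighbours V E w)"
  by (simp add: neighbours_def)

lemma colour_not_Blue: "c \<noteq> Blue \<longleftrightarrow> c = Red"
  by (cases c) auto

lemma simple_graph_subset: "simple_graph V E \<Longrightarrow> F \<subseteq> E \<Longrightarrow> simple_graph V F"
  by (auto simp: simple_graph_def)

lemma miae_optimalD:
  assumes "miae_optimal V E f E'"
  shows "simple_graph V E'" and "E \<subseteq> E'" and "finite V"
    and "\<And>w. w \<in> V \<Longrightarrow> \<not> under_illusion V E' f w"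
  using assms by (simp_all add: miae_optimal_def miae_feasible_def simple_graph_def)

lemma card_incident_edges:
  assumes "simple_graph V E"
  shows "card {e \<in> E. v \<in> e} = card (neighbours V E v)"
proof -
  have "{e \<in> E. v \<in> e} = (\<lambda>u. {u, v}) ` neighbours V E v"
  proof (rule set_eqI, rule iffI)
    fix e assume "e \<in> {e \<in> E. v \<in> e}"
    with assms obtain a b where "e = {a, b}" "a \<noteq> b" "a \<in> V" "b \<in> V" "e \<in> E" "v \<in> e"
      by (auto simp: simple_graph_def)
    then show "e \<in> (\<lambda>u. {u, v}) ` neighbours V E v"
      by (auto simp: neighbours_def insert_commute)
  qed (auto simp: neighbours_def)
  moreover have "inj_on (\<lambda>u. {u, v}) (neighbours V E v)"
    by (auto simp: inj_on_def doubleton_eq_iff)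
  ultimately show ?thesis
    by (simp add: card_image)
qed

lemma not_under_illusion_Diff_red_edge:
  assumes "finite V" and "\<not> under_illusion V E f w"
    and red: "\<And>x. {x, w} = e \<Longrightarrow> f x = Red"
  shows "\<not> under_illusion V (E - {e}) f w"
proof -
  have "{x \<in> neighbours V (E - {e}) w. f x = Blue} = {x \<in> neighbours V E w. f x = Blue}"
    unfolding neighbours_Diff_edge using red by fastforce
  then have "blue_deg V (E - {e}) f w = blue_deg V E f w"
    by (simp add: blue_deg_def)
  moreover have "red_deg V (E - {e}) f w \<le> red_deg V E f w"
    unfolding red_deg_def neighbours_Diff_edge
    by (rule card_mono) (auto simp: finite_neighbours[OF \<open>finite V\<close>])
  ultimately show ?thesis
    using assms(2) by (simp add: under_illusion_def)
qed

lemma miae_optimal_Diff_added_edge: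
  assumes opt: "miae_optimal V E f E'" and e: "e \<in> E' - E"
  shows "\<exists>w\<in>V. under_illusion V (E' - {e}) f w"
proof (rule ccontr)
  assume no_illusion: "\<not> (\<exists>w\<in>V. under_illusion V (E' - {e}) f w)"
  have sg: "simple_graph V E'"
    using miae_optimalD[OF opt] by simp
  have "miae_feasible V E f (E' - {e})"
    using no_illusion e miae_optimalD(2)[OF opt] simple_graph_subset[OF sg, of "E' - {e}"]
    by (auto simp: miae_feasible_def)
  then have "card (E' - E) \<le> card (E' - {e} - E)"
    using opt by (simp add: miae_optimal_def)
  also have "E' - {e} - E = (E' - E) - {e}"
    by blast
  finally have "card (E' - E) \<le> card ((E' - E) - {e})" .
  moreover have "finite E'"
    using sg by (auto simp: simple_graph_def intro: finite_subset[of _ "Pow V"])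
  ultimately show False
    using e card_Diff1_less[of "E' - E" e] by simp
qed

lemma miae_optimal_added_neighbour_of_red:
  assumes opt: "miae_optimal V E f E'" and "f v = Red"
    and u: "u \<in> neighbours V (E' - E) v"
  shows "f u = Blue"
proof (rule ccontr)
  assume "f u \<noteq> Blue"
  then have "f u = Red"
    by (simp add: colour_not_Blue)
  then have red: "\<And>x w. {x, w} = {u, v} \<Longrightarrow> f x = Red"
    using \<open>f v = Red\<close> by (metis doubleton_eq_iff)
  have "\<not> under_illusion V (E' - {{u, v}}) f w" if "w \<in> V" for w
    by (rule not_under_illusion_Diff_red_edge
        [OF miae_optimalD(3)[OF opt] miae_optimalD(4)[OF opt that] red])
  moreover have "{u, v} \<in> E' - E"
    using u by (simp add: neighbours_def)
  ultimately show False
    using miae_optimal_Diff_added_edge[OF opt] by blast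
qed

lemma degs_blue_added_neighbours:
  assumes "finite V" and "E \<subseteq> E'"
    and blue: "\<And>u. u \<in> neighbours V (E' - E) v \<Longrightarrow> f u = Blue"
  shows "red_deg V E' f v = red_deg V E f v"
    and "blue_deg V E' f v = blue_deg V E f v + card (neighbours V (E' - E) v)"
proof -
  have split: "neighbours V E' v = neighbours V E v \<union> neighbours V (E' - E) v"
    using \<open>E \<subseteq> E'\<close> by (auto simp: neighbours_def)
  have "{u \<in> neighbours V E' v. f u = Red} = {u \<in> neighbours V E v. f u = Red}"
    unfolding split using blue by force
  then show "red_deg V E' f v = red_deg V E f v"
    by (simp add: red_deg_def)
  have "{u \<in> neighbours V E' v. f u = Blue}
      = {u \<in> neighbours V E v. f u = Blue} \<union> neighbours V (E' - E) v"
    unfolding split using blue by auto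
  moreover have "{u \<in> neighbours V E v. f u = Blue} \<inter> neighbours V (E' - E) v = {}"
    by (auto simp: neighbours_def)
  ultimately show "blue_deg V E' f v = blue_deg V E f v + card (neighbours V (E' - E) v)"
    unfolding blue_deg_def using finite_neighbours[OF \<open>finite V\<close>]
    by (simp add: card_Un_disjoint)
qed

lemma miae_optimal_red_tight:
  assumes opt: "miae_optimal V E f E'" and "f v = Red"
    and u: "u \<in> neighbours V (E' - E) v"
  shows "red_deg V E' f v = blue_deg V E' f v"
proof -
  note fin = miae_optimalD(3)[OF opt] and feasible = miae_optimalD(4)[OF opt]
  have "{u, v} \<in> E' - E"
    using u by (simp add: neighbours_def)
  then obtain w where "w \<in> V" and ill: "under_illusion V (E' - {{u, v}}) f w"
    using miae_optimal_Diff_added_edge[OF opt] by blast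
  have "w = v"
  proof (rule ccontr)
    assume "w \<noteq> v"
    then have "\<And>x. {x, w} = {u, v} \<Longrightarrow> f x = Red"
      using \<open>f v = Red\<close> by (metis doubleton_eq_iff)
    with ill show False
      using not_under_illusion_Diff_red_edge[OF fin feasible[OF \<open>w \<in> V\<close>]] by blast
  qed
  have "f u = Blue"
    using miae_optimal_added_neighbour_of_red[OF opt \<open>f v = Red\<close> u] .
  have nbs: "neighbours V (E' - {{u, v}}) v = neighbours V E' v - {u}"
    unfolding neighbours_Diff_edge by (auto simp: doubleton_eq_iff)
  have blue_u: "u \<in> {x \<in> neighbours V E' v. f x = Blue}"
    using u \<open>f u = Blue\<close> by (auto simp: neighbours_def)
  have blue_set: "{x \<in> neighbours V (E' - {{u, v}}) v. f x = Blue}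
      = {x \<in> neighbours V E' v. f x = Blue} - {u}"
    unfolding nbs by blast
  have red_set: "{x \<in> neighbours V (E' - {{u, v}}) v. f x = Red} = {x \<in> neighbours V E' v. f x = Red}"
    unfolding nbs using \<open>f u = Blue\<close> by auto
  have "finite {x \<in> neighbours V E' v. f x = Blue}"
    using finite_neighbours[OF fin] by simp
  then have "blue_deg V E' f v = Suc (blue_deg V (E' - {{u, v}}) f v)"
    unfolding blue_deg_def blue_set using blue_u by (rule card.remove)
  moreover have "red_deg V (E' - {{u, v}}) f v = red_deg V E' f v"
    by (simp add: red_deg_def red_set)
  moreover have "\<not> under_illusion V E' f v" "under_illusion V (E' - {{u, v}}) f v"
    using ill feasible \<open>w \<in> V\<close> unfolding \<open>w = v\<close> by simp_all
  ultimately show ?thesis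
    unfolding under_illusion_def by linarith
qed

theorem mainTheorem3:
  fixes V :: "'a set" and E E' :: "'a set set" and f :: "'a \<Rightarrow> colour"
  assumes "simple_graph V E"
    and "card (blue_nodes V f) > card (red_nodes V f)"
    and "miae_optimal V E f E'"
    and "v \<in> red_nodes V f"
  shows "int (card {e \<in> E' - E. v \<in> e}) = max (int (red_deg V E f v) - int (blue_deg V E f v)) 0"
proof -
  let ?M = "neighbours V (E' - E) v"
  have sg: "simple_graph V E'" and "E \<subseteq> E'" and "finite V"
    using miae_optimalD[OF assms(3)] by simp_all
  have "v \<in> V" and "f v = Red"
    using assms(4) by (simp_all add: red_nodes_def)
  then have "\<not> under_illusion V E' f v"
    using miae_optimalD(4)[OF assms(3)] by blast
  have "simple_graph V (E' - E)"
    by (rule simple_graph_subset[OF sg]) blast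
  then have incident: "card {e \<in> E' - E. v \<in> e} = card ?M"
    by (rule card_incident_edges)
  have blue: "\<And>u. u \<in> ?M \<Longrightarrow> f u = Blue"
    by (rule miae_optimal_added_neighbour_of_red[OF assms(3) \<open>f v = Red\<close>])
  have red_eq: "red_deg V E' f v = red_deg V E f v"
    by (rule degs_blue_added_neighbours(1)[OF \<open>finite V\<close> \<open>E \<subseteq> E'\<close> blue])
  have blue_eq: "blue_deg V E' f v = blue_deg V E f v + card ?M"
    by (rule degs_blue_added_neighbours(2)[OF \<open>finite V\<close> \<open>E \<subseteq> E'\<close> blue])
  show ?thesis
  proof (cases "?M = {}")
    case True
    with incident red_eq blue_eq \<open>\<not> under_illusion V E' f v\<close> show ?thesis
      by (simp add: under_illusion_def)
  next
    case False
    then have "red_deg V E' f v = blue_deg V E' f v"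
      using miae_optimal_red_tight[OF assms(3) \<open>f v = Red\<close>] by blast
    with incident red_eq blue_eq show ?thesis
      by simp
  qed
qed

end
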